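(* $\mathfrak{L}(\mathrm{rtDBVA}(1))=\mathfrak{L}(\mathrm{1DFAMW})$.
   Context: $\mathfrak{L}(A)$ denotes the class of languages recognized by machines of type $A$. A real-time deterministic blind vector automaton of dimension $k$ ($\mathrm{rtDBVA}(k)$) is a 6-tuple $(Q,\Sigma,\delta,q_0,Q_a,v)$ with finite state set $Q$, initial state $q_0$, accept states $Q_a$, initial row vector $v\in\mathbb{Q}^k$ (freely chosen), and $\delta:Q\times(\Sigma\cup\{\cent,\$\})\to Q\times S$, $S$ the set of $k\times k$ rational matrices; the input $w$ is read as $\cent w\$$ left to right, one symbol per step, and $\delta(q,\sigma)=(q',M)$ means that in state $q$ reading $\sigma$ the machine goes to $q'$ and multiplies its row vector on the right by $M$. The input is accepted iff after processing $\$$ the state is in $Q_a$ and the first vector entry equals $1$. A one-way deterministic finite automaton with multiplication without equality (1DFAMW) is a 6-tuple $(Q,\Sigma,\delta,q_0,Q_a,\Gamma)$ with $\Gamma$ a finite set of rationals and a rational register initially $1$; the tape holds $\cent w\$$; $\delta:Q\times(\Sigma\cup\{\cent,\$\})\to Q\times\{\downarrow,\rightarrow\}\times\Gamma$, and $\delta(q,\sigma)=(q',d,\gamma)$ means that in state $q$ reading $\sigma$ it goes to $q'$, keeps the head in place ($\downarrow$) or moves it one cell right ($\rightarrow$), and multiplies the register by $\gamma$. The input is accepted iff the machine enters an accept state with register value $1$ after scanning $\$$. *)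

theory Defs
  imports Complex_Main
begin

datatype 'a tsym = Cent | Dollar | Sym 'a

definition tape :: "'a list \<Rightarrow> 'a tsym list" where
  "tape w = Cent # map Sym w @ [Dollar]"

definition tape_syms :: "'a set \<Rightarrow> 'a tsym set" where
  "tape_syms \<Sigma> = Sym ` \<Sigma> \<union> {Cent, Dollar}"

text \<open>Row vectors of dimension k are functions nat => rat (entries 0..k-1),
  k x k matrices are functions nat => nat => rat (entries below k).\<close>

definition vec_mat_mult :: "nat \<Rightarrow> (nat \<Rightarrow> rat) \<Rightarrow> (nat \<Rightarrow> nat \<Rightarrow> rat) \<Rightarrow> (nat \<Rightarrow> rat)" where
  "vec_mat_mult k v M = (\<lambda>j. if j < k then (\<Sum>i<k. v i * M i j) else 0)"

definition is_vec :: "nat \<Rightarrow> (nat \<Rightarrow> rat) \<Rightarrow> bool" where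
  "is_vec k v \<longleftrightarrow> (\<forall>i\<ge>k. v i = 0)"

definition is_mat :: "nat \<Rightarrow> (nat \<Rightarrow> nat \<Rightarrow> rat) \<Rightarrow> bool" where
  "is_mat k M \<longleftrightarrow> (\<forall>i j. (k \<le> i \<or> k \<le> j) \<longrightarrow> M i j = 0)"

fun rtDBVA_run :: "nat \<Rightarrow> (nat \<Rightarrow> 'a tsym \<Rightarrow> nat \<times> (nat \<Rightarrow> nat \<Rightarrow> rat))
    \<Rightarrow> nat \<times> (nat \<Rightarrow> rat) \<Rightarrow> 'a tsym list \<Rightarrow> nat \<times> (nat \<Rightarrow> rat)" where
  "rtDBVA_run k \<delta> c [] = c"
| "rtDBVA_run k \<delta> (q, v) (s # ss) =
     rtDBVA_run k \<delta> (fst (\<delta> q s), vec_mat_mult k v (snd (\<delta> q s))) ss"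

definition rtDBVA_wf ::
  "nat \<Rightarrow> 'a set \<Rightarrow> nat set \<Rightarrow> (nat \<Rightarrow> 'a tsym \<Rightarrow> nat \<times> (nat \<Rightarrow> nat \<Rightarrow> rat))
     \<Rightarrow> nat \<Rightarrow> nat set \<Rightarrow> (nat \<Rightarrow> rat) \<Rightarrow> bool" where
  "rtDBVA_wf k \<Sigma> Q \<delta> q0 Qa v \<longleftrightarrow>
     finite Q \<and> q0 \<in> Q \<and> Qa \<subseteq> Q \<and> is_vec k v \<and>
     (\<forall>q\<in>Q. \<forall>s\<in>tape_syms \<Sigma>. fst (\<delta> q s) \<in> Q \<and> is_mat k (snd (\<delta> q s)))"

definition rtDBVA_accepts ::
  "nat \<Rightarrow> (nat \<Rightarrow> 'a tsym \<Rightarrow> nat \<times> (nat \<Rightarrow> nat \<Rightarrow> rat)) \<Rightarrow> nat \<Rightarrow> nat set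
     \<Rightarrow> (nat \<Rightarrow> rat) \<Rightarrow> 'a list \<Rightarrow> bool" where
  "rtDBVA_accepts k \<delta> q0 Qa v w \<longleftrightarrow>
     (let (q, u) = rtDBVA_run k \<delta> (q0, v) (tape w) in q \<in> Qa \<and> u 0 = 1)"

definition rtDBVA_langs :: "nat \<Rightarrow> 'a set \<Rightarrow> 'a list set set" where
  "rtDBVA_langs k \<Sigma> = {L. \<exists>Q \<delta> q0 Qa v. rtDBVA_wf k \<Sigma> Q \<delta> q0 Qa v \<and>
       L = {w \<in> lists \<Sigma>. rtDBVA_accepts k \<delta> q0 Qa v w}}"

datatype dir = Stay | Right

text \<open>Configuration: (state, head position on the tape, register value).
  Once the head has moved off the right end (past the dollar) the machine
  has halted; the step function is then the identity.\<close>
definition DFAMW_step :: "(nat \<Rightarrow> 'a tsym \<Rightarrow> nat \<times> dir \<times> rat) \<Rightarrow> 'a tsym list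
    \<Rightarrow> nat \<times> nat \<times> rat \<Rightarrow> nat \<times> nat \<times> rat" where
  "DFAMW_step \<delta> t c = (case c of (q, i, r) \<Rightarrow>
     if i < length t then
       (case \<delta> q (t ! i) of (q', d, \<gamma>) \<Rightarrow>
          (q', (if d = Right then Suc i else i), r * \<gamma>))
     else c)"

definition DFAMW_wf ::
  "'a set \<Rightarrow> nat set \<Rightarrow> (nat \<Rightarrow> 'a tsym \<Rightarrow> nat \<times> dir \<times> rat) \<Rightarrow> nat \<Rightarrow> nat set
     \<Rightarrow> rat set \<Rightarrow> bool" where
  "DFAMW_wf \<Sigma> Q \<delta> q0 Qa \<Gamma> \<longleftrightarrow>
     finite Q \<and> q0 \<in> Q \<and> Qa \<subseteq> Q \<and> finite \<Gamma> \<and>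
     (\<forall>q\<in>Q. \<forall>s\<in>tape_syms \<Sigma>. fst (\<delta> q s) \<in> Q \<and> snd (snd (\<delta> q s)) \<in> \<Gamma>)"

definition DFAMW_accepts ::
  "(nat \<Rightarrow> 'a tsym \<Rightarrow> nat \<times> dir \<times> rat) \<Rightarrow> nat \<Rightarrow> nat set \<Rightarrow> 'a list \<Rightarrow> bool" where
  "DFAMW_accepts \<delta> q0 Qa w \<longleftrightarrow>
     (\<exists>n. case (DFAMW_step \<delta> (tape w) ^^ n) (q0, 0, 1) of (q, i, r) \<Rightarrow>
            i = length (tape w) \<and> q \<in> Qa \<and> r = 1)"

definition DFAMW_langs :: "'a set \<Rightarrow> 'a list set set" where
  "DFAMW_langs \<Sigma> = {L. \<exists>Q \<delta> q0 Qa \<Gamma>. DFAMW_wf \<Sigma> Q \<delta> q0 Qa \<Gamma> \<and>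
       L = {w \<in> lists \<Sigma>. DFAMW_accepts \<delta> q0 Qa w}}"

end

theory Submission
  imports Defs
begin

text \<open>A one-dimensional blind vector automaton is a real-time finite automaton whose rational
  register is multiplied by a weight at every step. A 1DFAMW may in addition pause on a
  symbol, but by determinism its stay phase on a symbol from a given state is fixed, so the
  phase can be replaced by a single real-time transition weighted by the product of the
  weights met. A phase that never leaves the symbol rejects; the real-time machine imitates
  this with weight 0, since a register equal to 0 stays 0. Conversely a real-time machine is
  a 1DFAMW that always moves right, with the initial vector entry folded into the weight
  read on the left end marker.\<close>

fun weighted_run :: "(nat \<Rightarrow> 'a \<Rightarrow> nat \<times> rat) \<Rightarrow> nat \<times> rat \<Rightarrow> 'a list \<Rightarrow> nat \<times> rat" where
  "weighted_run f c [] = c"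
| "weighted_run f (q, x) (s # ss) = weighted_run f (fst (f q s), x * snd (f q s)) ss"

lemma weighted_run_zero: "snd (weighted_run f (q, 0) ss) = 0"
  by (induction ss arbitrary: q) auto

lemma weighted_run_cong:
  "(\<And>q s. s \<in> set ss \<Longrightarrow> f q s = g q s) \<Longrightarrow> weighted_run f c ss = weighted_run g c ss"
  by (induction ss arbitrary: c) (auto split: prod.splits)

definition entry_transitions ::
  "(nat \<Rightarrow> 'a \<Rightarrow> nat \<times> (nat \<Rightarrow> nat \<Rightarrow> rat)) \<Rightarrow> nat \<Rightarrow> 'a \<Rightarrow> nat \<times> rat" where
  "entry_transitions \<delta> q s = (fst (\<delta> q s), snd (\<delta> q s) 0 0)"

lemma rtDBVA_run_dim1:
  "fst (rtDBVA_run 1 \<delta> (q, v) ss) = fst (weighted_run (entry_transitions \<delta>) (q, v 0) ss)"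
  "snd (rtDBVA_run 1 \<delta> (q, v) ss) 0 = snd (weighted_run (entry_transitions \<delta>) (q, v 0) ss)"
  by (induction ss arbitrary: q v) (simp_all add: vec_mat_mult_def entry_transitions_def)

lemma rtDBVA_accepts_dim1_iff:
  "rtDBVA_accepts 1 \<delta> q0 Qa v w \<longleftrightarrow>
     (case weighted_run (entry_transitions \<delta>) (q0, v 0) (tape w) of (q, x) \<Rightarrow> q \<in> Qa \<and> x = 1)"
  using rtDBVA_run_dim1[of \<delta> q0 v "tape w"]
  by (simp add: rtDBVA_accepts_def case_prod_beta)

fun stay_run :: "(nat \<Rightarrow> 'a \<Rightarrow> nat \<times> dir \<times> rat) \<Rightarrow> 'a \<Rightarrow> nat \<Rightarrow> nat \<Rightarrow> nat \<times> rat" where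
  "stay_run \<delta> s 0 q = (q, 1)"
| "stay_run \<delta> s (Suc m) q = (fst (stay_run \<delta> s m (fst (\<delta> q s))),
      snd (snd (\<delta> q s)) * snd (stay_run \<delta> s m (fst (\<delta> q s))))"

definition stay_dir :: "(nat \<Rightarrow> 'a \<Rightarrow> nat \<times> dir \<times> rat) \<Rightarrow> 'a \<Rightarrow> nat \<Rightarrow> nat \<Rightarrow> dir" where
  "stay_dir \<delta> s m q = fst (snd (\<delta> (fst (stay_run \<delta> s m q)) s))"

lemma stay_run_closed:
  "q \<in> Q \<Longrightarrow> \<forall>q\<in>Q. fst (\<delta> q s) \<in> Q \<Longrightarrow> fst (stay_run \<delta> s m q) \<in> Q"
  by (induction m arbitrary: q) auto

lemma DFAMW_step_funpow_stay:
  assumes "i < length t" "t ! i = s" "\<forall>k<m. stay_dir \<delta> s k q = Stay"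
  shows "(DFAMW_step \<delta> t ^^ m) (q, i, r) = (fst (stay_run \<delta> s m q), i, r * snd (stay_run \<delta> s m q))"
  using assms(3)
proof (induction m arbitrary: q r)
  case 0
  then show ?case by simp
next
  case (Suc m)
  obtain q1 d g where \<delta>q: "\<delta> q s = (q1, d, g)" by (metis prod.exhaust)
  have "d = Stay" using Suc.prems \<delta>q by (force simp: stay_dir_def)
  then have step: "DFAMW_step \<delta> t (q, i, r) = (q1, i, r * g)"
    using assms(1,2) \<delta>q by (simp add: DFAMW_step_def)
  have "\<forall>k<m. stay_dir \<delta> s k q1 = Stay"
    using Suc.prems \<delta>q by (auto simp: stay_dir_def)
  then have "(DFAMW_step \<delta> t ^^ m) (q1, i, r * g) =
      (fst (stay_run \<delta> s m q1), i, r * g * snd (stay_run \<delta> s m q1))"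
    using Suc.IH by blast
  then show ?case by (simp add: funpow_Suc_right step \<delta>q mult.assoc del: funpow.simps)
qed

definition collapse_stays :: "(nat \<Rightarrow> 'a \<Rightarrow> nat \<times> dir \<times> rat) \<Rightarrow> nat \<Rightarrow> 'a \<Rightarrow> nat \<times> rat" where
  "collapse_stays \<delta> q s = (if \<exists>m. stay_dir \<delta> s m q = Right then
      (let m = (LEAST m. stay_dir \<delta> s m q = Right); p = fst (stay_run \<delta> s m q) in
        (fst (\<delta> p s), snd (stay_run \<delta> s m q) * snd (snd (\<delta> p s))))
    else (q, 0))"

lemma collapse_stays_closed:
  assumes "q \<in> Q" "\<forall>q\<in>Q. fst (\<delta> q s) \<in> Q"
  shows "fst (collapse_stays \<delta> q s) \<in> Q"
  using stay_run_closed[of q Q \<delta> s] assms by (auto simp: collapse_stays_def Let_def)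

lemma collapse_stays_always_right:
  assumes "\<And>q. fst (snd (\<delta> q s)) = Right"
  shows "collapse_stays \<delta> q s = (fst (\<delta> q s), snd (snd (\<delta> q s)))"
proof -
  have "stay_dir \<delta> s 0 q = Right" using assms by (simp add: stay_dir_def)
  moreover from this have "(LEAST m. stay_dir \<delta> s m q = Right) = 0" by (rule Least_eq_0)
  ultimately show ?thesis by (auto simp: collapse_stays_def)
qed

definition DFAMW_accepts_from ::
  "(nat \<Rightarrow> 'a tsym \<Rightarrow> nat \<times> dir \<times> rat) \<Rightarrow> 'a tsym list \<Rightarrow> nat set
     \<Rightarrow> nat \<times> nat \<times> rat \<Rightarrow> bool" where
  "DFAMW_accepts_from \<delta> t Qa c \<longleftrightarrow>
     (\<exists>n. case (DFAMW_step \<delta> t ^^ n) c of (q, i, r) \<Rightarrow> i = length t \<and> q \<in> Qa \<and> r = 1)"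

lemma DFAMW_step_funpow_halted: "(DFAMW_step \<delta> t ^^ n) (q, length t, r) = (q, length t, r)"
  by (induction n) (simp_all add: DFAMW_step_def)

lemma DFAMW_accepts_from_funpow:
  "DFAMW_accepts_from \<delta> t Qa ((DFAMW_step \<delta> t ^^ N) c) \<longleftrightarrow> DFAMW_accepts_from \<delta> t Qa c"
proof
  assume "DFAMW_accepts_from \<delta> t Qa ((DFAMW_step \<delta> t ^^ N) c)"
  then show "DFAMW_accepts_from \<delta> t Qa c"
    unfolding DFAMW_accepts_from_def by (metis funpow_add comp_apply)
next
  assume "DFAMW_accepts_from \<delta> t Qa c"
  then obtain n q r where n: "(DFAMW_step \<delta> t ^^ n) c = (q, length t, r)" "q \<in> Qa" "r = 1"
    unfolding DFAMW_accepts_from_def by (fastforce split: prod.splits)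
  have "(DFAMW_step \<delta> t ^^ n) ((DFAMW_step \<delta> t ^^ N) c) = (DFAMW_step \<delta> t ^^ N) (q, length t, r)"
    by (metis n(1) funpow_add add.commute comp_apply)
  then show "DFAMW_accepts_from \<delta> t Qa ((DFAMW_step \<delta> t ^^ N) c)"
    using n by (auto simp: DFAMW_accepts_from_def DFAMW_step_funpow_halted intro!: exI[of _ n])
qed

lemma dir_neq_Right_iff: "d \<noteq> Right \<longleftrightarrow> d = Stay"
  by (cases d) auto

lemma DFAMW_accepts_from_iff_weighted_run:
  "i \<le> length t \<Longrightarrow> DFAMW_accepts_from \<delta> t Qa (q, i, r) \<longleftrightarrow>
     (case weighted_run (collapse_stays \<delta>) (q, r) (drop i t) of (q', x) \<Rightarrow> q' \<in> Qa \<and> x = 1)"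
proof (induction "length t - i" arbitrary: i q r)
  case 0
  then have "i = length t" by simp
  then show ?case by (simp add: DFAMW_accepts_from_def DFAMW_step_funpow_halted)
next
  case (Suc n)
  then have i: "i < length t" by simp
  define s where "s = t ! i"
  have drop_i: "drop i t = s # drop (Suc i) t" using i by (simp add: s_def Cons_nth_drop_Suc)
  show ?case
  proof (cases "\<exists>m. stay_dir \<delta> s m q = Right")
    case True
    define m where "m = (LEAST m. stay_dir \<delta> s m q = Right)"
    define p where "p = fst (stay_run \<delta> s m q)"
    have right: "stay_dir \<delta> s m q = Right" unfolding m_def using True by (rule LeastI_ex)
    have "\<forall>k<m. stay_dir \<delta> s k q = Stay"
      using not_less_Least dir_neq_Right_iff unfolding m_def by blast
    then have stays: "(DFAMW_step \<delta> t ^^ m) (q, i, r) = (p, i, r * snd (stay_run \<delta> s m q))"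
      using DFAMW_step_funpow_stay[OF i s_def[symmetric]] p_def by simp
    obtain q1 g where \<delta>p: "\<delta> p s = (q1, Right, g)"
      using right unfolding stay_dir_def p_def[symmetric] by (cases "\<delta> p s") auto
    have collapse: "collapse_stays \<delta> q s = (q1, snd (stay_run \<delta> s m q) * g)"
      using True \<delta>p by (simp add: collapse_stays_def m_def p_def Let_def)
    have "(DFAMW_step \<delta> t ^^ Suc m) (q, i, r) = (q1, Suc i, r * snd (stay_run \<delta> s m q) * g)"
      using stays i \<delta>p s_def by (simp add: DFAMW_step_def)
    then have "DFAMW_accepts_from \<delta> t Qa (q, i, r) \<longleftrightarrow>
        DFAMW_accepts_from \<delta> t Qa (q1, Suc i, r * snd (stay_run \<delta> s m q) * g)"
      using DFAMW_accepts_from_funpow[of \<delta> t Qa "Suc m" "(q, i, r)"] by simp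
    also have "\<dots> \<longleftrightarrow> (case weighted_run (collapse_stays \<delta>) (q1, r * snd (stay_run \<delta> s m q) * g)
        (drop (Suc i) t) of (q', x) \<Rightarrow> q' \<in> Qa \<and> x = 1)"
      using Suc i by simp
    also have "\<dots> \<longleftrightarrow>
        (case weighted_run (collapse_stays \<delta>) (q, r) (drop i t) of (q', x) \<Rightarrow> q' \<in> Qa \<and> x = 1)"
      by (simp add: drop_i collapse mult.assoc)
    finally show ?thesis .
  next
    case False
    then have "\<forall>k. stay_dir \<delta> s k q = Stay" using dir_neq_Right_iff by blast
    then have "\<not> DFAMW_accepts_from \<delta> t Qa (q, i, r)"
      using DFAMW_step_funpow_stay[OF i s_def[symmetric]] i
      by (simp add: DFAMW_accepts_from_def)
    moreover have "collapse_stays \<delta> q s = (q, 0)" using False by (simp add: collapse_stays_def)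
    ultimately show ?thesis
      using weighted_run_zero[of "collapse_stays \<delta>" q "drop (Suc i) t"]
      by (simp add: drop_i case_prod_beta)
  qed
qed

lemma DFAMW_accepts_iff_weighted_run:
  "DFAMW_accepts \<delta> q0 Qa w \<longleftrightarrow>
     (case weighted_run (collapse_stays \<delta>) (q0, 1) (tape w) of (q, x) \<Rightarrow> q \<in> Qa \<and> x = 1)"
  unfolding DFAMW_accepts_def DFAMW_accepts_from_def[symmetric]
  by (simp add: DFAMW_accepts_from_iff_weighted_run)

lemma DFAMW_langs_subset_rtDBVA_langs: "DFAMW_langs \<Sigma> \<subseteq> rtDBVA_langs 1 \<Sigma>"
proof
  fix L assume "L \<in> DFAMW_langs \<Sigma>"
  then obtain Q \<delta> q0 Qa \<Gamma> where wf: "DFAMW_wf \<Sigma> Q \<delta> q0 Qa \<Gamma>"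
    and L: "L = {w \<in> lists \<Sigma>. DFAMW_accepts \<delta> q0 Qa w}" unfolding DFAMW_langs_def by blast
  define \<delta>' where "\<delta>' = (\<lambda>q s. (fst (collapse_stays \<delta> q s),
      \<lambda>(i::nat) (j::nat). if i = 0 \<and> j = 0 then snd (collapse_stays \<delta> q s) else 0))"
  define v :: "nat \<Rightarrow> rat" where "v = (\<lambda>i. if i = 0 then 1 else 0)"
  have "rtDBVA_wf 1 \<Sigma> Q \<delta>' q0 Qa v"
    unfolding rtDBVA_wf_def
  proof (intro conjI ballI)
    show "finite Q" "q0 \<in> Q" "Qa \<subseteq> Q" using wf by (auto simp: DFAMW_wf_def)
    show "is_vec 1 v" by (simp add: is_vec_def v_def)
    fix q s assume "q \<in> Q" "s \<in> tape_syms \<Sigma>"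
    then show "fst (\<delta>' q s) \<in> Q" "is_mat 1 (snd (\<delta>' q s))"
      using wf collapse_stays_closed[of q Q \<delta> s] by (auto simp: DFAMW_wf_def is_mat_def \<delta>'_def)
  qed
  moreover have "entry_transitions \<delta>' = collapse_stays \<delta>"
    by (simp add: fun_eq_iff entry_transitions_def \<delta>'_def)
  then have "DFAMW_accepts \<delta> q0 Qa w \<longleftrightarrow> rtDBVA_accepts 1 \<delta>' q0 Qa v w" for w
    unfolding DFAMW_accepts_iff_weighted_run rtDBVA_accepts_dim1_iff by (simp add: v_def)
  ultimately show "L \<in> rtDBVA_langs 1 \<Sigma>" unfolding rtDBVA_langs_def L by blast
qed

lemma rtDBVA_langs_subset_DFAMW_langs:
  assumes "finite \<Sigma>"
  shows "rtDBVA_langs 1 \<Sigma> \<subseteq> DFAMW_langs \<Sigma>"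
proof
  fix L assume "L \<in> rtDBVA_langs 1 \<Sigma>"
  then obtain Q \<delta> q0 Qa v where wf: "rtDBVA_wf 1 \<Sigma> Q \<delta> q0 Qa v"
    and L: "L = {w \<in> lists \<Sigma>. rtDBVA_accepts 1 \<delta> q0 Qa v w}" unfolding rtDBVA_langs_def by blast
  define \<delta>' where "\<delta>' = (\<lambda>q s. (fst (\<delta> q s), Right, (if s = Cent then v 0 else 1) * snd (\<delta> q s) 0 0))"
  define \<Gamma> where "\<Gamma> = (\<lambda>(q, s). snd (snd (\<delta>' q s))) ` (Q \<times> tape_syms \<Sigma>)"
  have "DFAMW_wf \<Sigma> Q \<delta>' q0 Qa \<Gamma>"
    unfolding DFAMW_wf_def
  proof (intro conjI ballI)
    show "finite Q" "q0 \<in> Q" "Qa \<subseteq> Q" using wf by (auto simp: rtDBVA_wf_def)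
    show "finite \<Gamma>" using wf assms by (simp add: \<Gamma>_def rtDBVA_wf_def tape_syms_def)
    fix q s assume qs: "q \<in> Q" "s \<in> tape_syms \<Sigma>"
    then show "fst (\<delta>' q s) \<in> Q" using wf by (simp add: rtDBVA_wf_def \<delta>'_def)
    show "snd (snd (\<delta>' q s)) \<in> \<Gamma>" unfolding \<Gamma>_def using qs by force
  qed
  moreover have "rtDBVA_accepts 1 \<delta> q0 Qa v w \<longleftrightarrow> DFAMW_accepts \<delta>' q0 Qa w" for w
  proof -
    have collapse: "collapse_stays \<delta>' q s = (fst (\<delta> q s), (if s = Cent then v 0 else 1) * snd (\<delta> q s) 0 0)"
      for q s by (simp add: collapse_stays_always_right \<delta>'_def)
    have "weighted_run (collapse_stays \<delta>') c (map Sym w @ [Dollar]) =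
        weighted_run (entry_transitions \<delta>) c (map Sym w @ [Dollar])" for c
      by (rule weighted_run_cong) (auto simp: collapse entry_transitions_def)
    then show ?thesis
      unfolding rtDBVA_accepts_dim1_iff DFAMW_accepts_iff_weighted_run
      by (simp add: tape_def collapse entry_transitions_def)
  qed
  ultimately show "L \<in> DFAMW_langs \<Sigma>" unfolding DFAMW_langs_def L by blast
qed

theorem theorem9:
  fixes \<Sigma> :: "'a set"
  assumes "finite \<Sigma>"
  shows "rtDBVA_langs 1 \<Sigma> = DFAMW_langs \<Sigma>"
  using rtDBVA_langs_subset_DFAMW_langs[OF assms] DFAMW_langs_subset_rtDBVA_langs by blast

end
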